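(* Let $\boldsymbol{\lambda}\in\Delta_N$, $\boldsymbol{\nu}=(\nu_1,\dots,\nu_N)\in\mathcal{P}_1(\mathbb{R})^N$, $\theta\in[0,1]$ and $\nu^\theta=\mathrm{VMed}_{\boldsymbol{\lambda}}(\theta,\boldsymbol{\nu})$. If $\nu_1,\dots,\nu_N$ are absolutely continuous with respect to Lebesgue measure with densities $f_1,\dots,f_N\in L^1(\mathbb{R})$, then $\nu^\theta$ is absolutely continuous with a density $f_{\nu^\theta}\in L^1(\mathbb{R})$ satisfying $$\min_{1\le i\le N}f_i\le f_{\nu^\theta}\le\max_{1\le i\le N}f_i\quad\text{a.e. on }\mathbb{R}.$$ In particular, if for some $p\in[1,\infty]$ one has $f_i\in L^p(\mathbb{R})$ for $i=1,\dots,N$, then $f_{\nu^\theta}\in L^p(\mathbb{R})$ and $$\|\min_i f_i\|_{L^p(\mathbb{R})}\le\|f_{\nu^\theta}\|_{L^p(\mathbb{R})}\le\|\max_i f_i\|_{L^p(\mathbb{R})}\le\sum_{i=1}^N\|f_i\|_{L^p(\mathbb{R})}.$$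
   Context: $\Delta_N=\{(\lambda_1,\dots,\lambda_N)\in\mathbb{R}_+^N:\sum_i\lambda_i=1\}$; $\mathcal{P}_1(\mathbb{R})$ denotes Borel probability measures on $\mathbb{R}$ with finite first moment. For $\nu\in\mathcal{P}_1(\mathbb{R})$, $F_\nu(x)=\nu((-\infty,x])$ is its cdf. For $\mathbf{x}=(x_1,\dots,x_N)\in\mathbb{R}^N$, the lower and upper weighted medians are $\mathrm{M}^-_{\boldsymbol{\lambda}}(\mathbf{x})=\inf\{y\in\mathbb{R}:\sum_{i:x_i\le y}\lambda_i\ge\frac12\}$ and $\mathrm{M}^+_{\boldsymbol{\lambda}}(\mathbf{x})=\sup\{y\in\mathbb{R}:\sum_{i:x_i<y}\lambda_i\le\frac12\}$. Set $F^\pm(x)=\mathrm{M}^\pm_{\boldsymbol{\lambda}}(F_{\nu_1}(x),\dots,F_{\nu_N}(x))$ and $F_\theta=(1-\theta)F^-+\theta F^+$; $F_\theta$ is the cdf of a probability measure in $\mathcal{P}_1(\mathbb{R})$, which is denoted $\mathrm{VMed}_{\boldsymbol{\lambda}}(\theta,\boldsymbol{\nu})$ (vertical median selection). *)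

theory Defs
  imports "HOL-Probability.Probability"
begin

text \<open>Weights and measures are indexed by i < N (i.e. 0..N-1).\<close>

definition lower_wmedian :: "nat \<Rightarrow> (nat \<Rightarrow> real) \<Rightarrow> (nat \<Rightarrow> real) \<Rightarrow> real" where
  "lower_wmedian N lam x = Inf {y. (\<Sum>i\<in>{i. i < N \<and> x i \<le> y}. lam i) \<ge> 1/2}"

definition upper_wmedian :: "nat \<Rightarrow> (nat \<Rightarrow> real) \<Rightarrow> (nat \<Rightarrow> real) \<Rightarrow> real" where
  "upper_wmedian N lam x = Sup {y. (\<Sum>i\<in>{i. i < N \<and> x i < y}. lam i) \<le> 1/2}"

definition F_minus :: "nat \<Rightarrow> (nat \<Rightarrow> real) \<Rightarrow> (nat \<Rightarrow> real measure) \<Rightarrow> real \<Rightarrow> real" where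
  "F_minus N lam nu x = lower_wmedian N lam (\<lambda>i. cdf (nu i) x)"

definition F_plus :: "nat \<Rightarrow> (nat \<Rightarrow> real) \<Rightarrow> (nat \<Rightarrow> real measure) \<Rightarrow> real \<Rightarrow> real" where
  "F_plus N lam nu x = upper_wmedian N lam (\<lambda>i. cdf (nu i) x)"

definition F_theta :: "nat \<Rightarrow> (nat \<Rightarrow> real) \<Rightarrow> real \<Rightarrow> (nat \<Rightarrow> real measure) \<Rightarrow> real \<Rightarrow> real" where
  "F_theta N lam \<theta> nu x = (1 - \<theta>) * F_minus N lam nu x + \<theta> * F_plus N lam nu x"

text \<open>The probability measure on the reals whose cdf is F_theta (unique when it exists).\<close>
definition VMed :: "nat \<Rightarrow> (nat \<Rightarrow> real) \<Rightarrow> real \<Rightarrow> (nat \<Rightarrow> real measure) \<Rightarrow> real measure" where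
  "VMed N lam \<theta> nu = (SOME \<mu>. prob_space \<mu> \<and> sets \<mu> = sets borel \<and>
      (\<forall>x. cdf \<mu> x = F_theta N lam \<theta> nu x))"

definition Lp_mem :: "ennreal \<Rightarrow> (real \<Rightarrow> real) \<Rightarrow> bool" where
  "Lp_mem p f \<longleftrightarrow> f \<in> borel_measurable lborel \<and>
     (if p = \<infinity> then esssup lborel (\<lambda>x. ereal \<bar>f x\<bar>) < \<infinity>
      else integrable lborel (\<lambda>x. \<bar>f x\<bar> powr enn2real p))"

definition Lp_norm :: "ennreal \<Rightarrow> (real \<Rightarrow> real) \<Rightarrow> real" where
  "Lp_norm p f = (if p = \<infinity> then real_of_ereal (esssup lborel (\<lambda>x. ereal \<bar>f x\<bar>))
      else (LINT x|lborel. \<bar>f x\<bar> powr enn2real p) powr (1 / enn2real p))"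

end

theory Submission
  imports Defs
begin

(*
  Translating every coordinate by at most D moves both weighted medians by at most D, and
  the medians are monotone. Hence every increment F_theta b - F_theta a lies between the
  smallest and the largest of the increments F_nu_i b - F_nu_i a, which are the integrals of
  f_i over (a, b]. So F_theta is a distribution function, and the measure it generates is
  squeezed, first on intervals and then on all Borel sets, between the measures with densities
  min_i f_i and max_i f_i. Being dominated by an absolutely continuous finite measure, it has a
  density g by Radon-Nikodym, and the two set-wise inequalities give min_i f_i <= g <= max_i f_i
  almost everywhere. The L^p bounds follow from monotonicity of the norm, from
  |max_i f_i| <= max_i |f_i|, and from superadditivity of t |-> t^p for p >= 1.
*)

section \<open>Weighted medians\<close>

locale simplex_weights =
  fixes N :: nat and lam :: "nat \<Rightarrow> real"
  assumes lam_nonneg: "\<forall>i<N. lam i \<ge> 0" and lam_sum: "(\<Sum>i<N. lam i) = 1"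
begin

definition mass :: "(nat \<Rightarrow> bool) \<Rightarrow> real" where
  "mass P = (\<Sum>i\<in>{i. i < N \<and> P i}. lam i)"

lemma N_pos: "N > 0"
  using lam_sum by (cases N) auto

lemma mass_mono:
  assumes "\<And>i. i < N \<Longrightarrow> P i \<Longrightarrow> Q i"
  shows "mass P \<le> mass Q"
  unfolding mass_def by (rule sum_mono2) (use assms lam_nonneg in auto)

lemma mass_all:
  assumes "\<And>i. i < N \<Longrightarrow> P i"
  shows "mass P = 1"
proof -
  have "{i. i < N \<and> P i} = {..<N}" using assms by auto
  then show ?thesis using lam_sum by (simp add: mass_def)
qed

lemma mass_none:
  assumes "\<And>i. i < N \<Longrightarrow> \<not> P i"
  shows "mass P = 0"
proof -
  have "{i. i < N \<and> P i} = {}" using assms by auto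
  then show ?thesis unfolding mass_def by (simp only: sum.empty)
qed

lemma Min_le_coord:
  fixes x :: "nat \<Rightarrow> real"
  shows "i < N \<Longrightarrow> Min (x ` {..<N}) \<le> x i"
  by (rule Min_le) auto

lemma coord_le_Max:
  fixes x :: "nat \<Rightarrow> real"
  shows "i < N \<Longrightarrow> x i \<le> Max (x ` {..<N})"
  by (rule Max_ge) auto

lemma lower_wmedian_eq: "lower_wmedian N lam x = Inf {y. mass (\<lambda>i. x i \<le> y) \<ge> 1/2}"
  unfolding lower_wmedian_def mass_def ..

lemma upper_wmedian_eq: "upper_wmedian N lam x = Sup {y. mass (\<lambda>i. x i < y) \<le> 1/2}"
  unfolding upper_wmedian_def mass_def ..

lemma lower_wmedian_set_bounds:
  fixes x :: "nat \<Rightarrow> real"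
  shows "Max (x ` {..<N}) \<in> {y. mass (\<lambda>i. x i \<le> y) \<ge> 1/2}"
  "y \<in> {y. mass (\<lambda>i. x i \<le> y) \<ge> 1/2} \<Longrightarrow> Min (x ` {..<N}) \<le> y"
proof -
  show "Max (x ` {..<N}) \<in> {y. mass (\<lambda>i. x i \<le> y) \<ge> 1/2}"
    using mass_all[of "\<lambda>i. x i \<le> Max (x ` {..<N})"] coord_le_Max by simp
  show "Min (x ` {..<N}) \<le> y" if "y \<in> {y. mass (\<lambda>i. x i \<le> y) \<ge> 1/2}"
  proof (rule ccontr)
    assume "\<not> Min (x ` {..<N}) \<le> y"
    then have "mass (\<lambda>i. x i \<le> y) = 0"
      using Min_le_coord[of _ x] by (intro mass_none) (meson order.trans)
    with that show False by simp
  qed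
qed

lemma upper_wmedian_set_bounds:
  fixes x :: "nat \<Rightarrow> real"
  shows "Min (x ` {..<N}) \<in> {y. mass (\<lambda>i. x i < y) \<le> 1/2}"
  "y \<in> {y. mass (\<lambda>i. x i < y) \<le> 1/2} \<Longrightarrow> y \<le> Max (x ` {..<N})"
proof -
  show "Min (x ` {..<N}) \<in> {y. mass (\<lambda>i. x i < y) \<le> 1/2}"
    using mass_none[of "\<lambda>i. x i < Min (x ` {..<N})"] Min_le_coord by (simp add: not_less)
  show "y \<le> Max (x ` {..<N})" if "y \<in> {y. mass (\<lambda>i. x i < y) \<le> 1/2}"
  proof (rule ccontr)
    assume "\<not> y \<le> Max (x ` {..<N})"
    then have "mass (\<lambda>i. x i < y) = 1"
      using coord_le_Max[of _ x] by (intro mass_all) (meson order.strict_trans1 not_le)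
    with that show False by simp
  qed
qed

lemma lower_wmedian_between:
  fixes x :: "nat \<Rightarrow> real"
  shows "Min (x ` {..<N}) \<le> lower_wmedian N lam x" "lower_wmedian N lam x \<le> Max (x ` {..<N})"
proof -
  have bdd: "bdd_below {y. mass (\<lambda>i. x i \<le> y) \<ge> 1/2}"
    by (rule bdd_belowI) (rule lower_wmedian_set_bounds(2))
  show "Min (x ` {..<N}) \<le> lower_wmedian N lam x"
    unfolding lower_wmedian_eq
    by (rule cInf_greatest) (use lower_wmedian_set_bounds in blast)+
  show "lower_wmedian N lam x \<le> Max (x ` {..<N})"
    unfolding lower_wmedian_eq by (rule cInf_lower[OF lower_wmedian_set_bounds(1) bdd])
qed

lemma upper_wmedian_between:
  fixes x :: "nat \<Rightarrow> real"
  shows "Min (x ` {..<N}) \<le> upper_wmedian N lam x" "upper_wmedian N lam x \<le> Max (x ` {..<N})"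
proof -
  have bdd: "bdd_above {y. mass (\<lambda>i. x i < y) \<le> 1/2}"
    by (rule bdd_aboveI) (rule upper_wmedian_set_bounds(2))
  show "Min (x ` {..<N}) \<le> upper_wmedian N lam x"
    unfolding upper_wmedian_eq by (rule cSup_upper[OF upper_wmedian_set_bounds(1) bdd])
  show "upper_wmedian N lam x \<le> Max (x ` {..<N})"
    unfolding upper_wmedian_eq
    by (rule cSup_least) (use upper_wmedian_set_bounds in blast)+
qed

lemma lower_wmedian_le_shift:
  assumes "\<And>i. i < N \<Longrightarrow> y i \<le> x i + D"
  shows "lower_wmedian N lam y \<le> lower_wmedian N lam x + D"
proof -
  have "lower_wmedian N lam y - D \<le> Inf {t. mass (\<lambda>i. x i \<le> t) \<ge> 1/2}"
  proof (rule cInf_greatest)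
    show "{t. mass (\<lambda>i. x i \<le> t) \<ge> 1/2} \<noteq> {}"
      using lower_wmedian_set_bounds(1) by blast
    fix t assume "t \<in> {t. mass (\<lambda>i. x i \<le> t) \<ge> 1/2}"
    moreover have "mass (\<lambda>i. x i \<le> t) \<le> mass (\<lambda>i. y i \<le> t + D)"
    proof (rule mass_mono)
      show "y i \<le> t + D" if "i < N" "x i \<le> t" for i
        using assms[OF that(1)] that(2) by linarith
    qed
    ultimately have "t + D \<in> {t. mass (\<lambda>i. y i \<le> t) \<ge> 1/2}" by simp
    then have "lower_wmedian N lam y \<le> t + D"
      unfolding lower_wmedian_eq
      by (rule cInf_lower) (rule bdd_belowI, rule lower_wmedian_set_bounds(2))
    then show "lower_wmedian N lam y - D \<le> t" by simp
  qed
  then show ?thesis by (simp add: lower_wmedian_eq)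
qed

lemma upper_wmedian_le_shift:
  assumes "\<And>i. i < N \<Longrightarrow> y i \<le> x i + D"
  shows "upper_wmedian N lam y \<le> upper_wmedian N lam x + D"
proof -
  have "Sup {t. mass (\<lambda>i. y i < t) \<le> 1/2} \<le> upper_wmedian N lam x + D"
  proof (rule cSup_least)
    show "{t. mass (\<lambda>i. y i < t) \<le> 1/2} \<noteq> {}"
      using upper_wmedian_set_bounds(1) by blast
    fix t assume "t \<in> {t. mass (\<lambda>i. y i < t) \<le> 1/2}"
    moreover have "mass (\<lambda>i. x i < t - D) \<le> mass (\<lambda>i. y i < t)"
    proof (rule mass_mono)
      show "y i < t" if "i < N" "x i < t - D" for i
        using assms[OF that(1)] that(2) by linarith
    qed
    ultimately have "t - D \<in> {t. mass (\<lambda>i. x i < t) \<le> 1/2}" by simp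
    then have "t - D \<le> upper_wmedian N lam x"
      unfolding upper_wmedian_eq
      by (rule cSup_upper) (rule bdd_aboveI, rule upper_wmedian_set_bounds(2))
    then show "t \<le> upper_wmedian N lam x + D" by simp
  qed
  then show ?thesis by (simp add: upper_wmedian_eq)
qed

lemma wmedian_increment_between:
  fixes x y :: "nat \<Rightarrow> real"
  defines "d \<equiv> \<lambda>i. y i - x i"
  shows "Min (d ` {..<N}) \<le> lower_wmedian N lam y - lower_wmedian N lam x"
    "lower_wmedian N lam y - lower_wmedian N lam x \<le> Max (d ` {..<N})"
    "Min (d ` {..<N}) \<le> upper_wmedian N lam y - upper_wmedian N lam x"
    "upper_wmedian N lam y - upper_wmedian N lam x \<le> Max (d ` {..<N})"
proof -
  have up: "y i \<le> x i + Max (d ` {..<N})" and down: "x i \<le> y i + - Min (d ` {..<N})"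
    if "i < N" for i
    using coord_le_Max[OF that, of d] Min_le_coord[OF that, of d] by (auto simp: d_def)
  show "Min (d ` {..<N}) \<le> lower_wmedian N lam y - lower_wmedian N lam x"
    using lower_wmedian_le_shift[of x y "- Min (d ` {..<N})"] down by simp
  show "lower_wmedian N lam y - lower_wmedian N lam x \<le> Max (d ` {..<N})"
    using lower_wmedian_le_shift[of y x "Max (d ` {..<N})"] up by simp
  show "Min (d ` {..<N}) \<le> upper_wmedian N lam y - upper_wmedian N lam x"
    using upper_wmedian_le_shift[of x y "- Min (d ` {..<N})"] down by simp
  show "upper_wmedian N lam y - upper_wmedian N lam x \<le> Max (d ` {..<N})"
    using upper_wmedian_le_shift[of y x "Max (d ` {..<N})"] up by simp
qed

end

section \<open>Distribution functions enveloped by finitely many others\<close>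

lemma tendsto_Max_image:
  fixes g :: "'i \<Rightarrow> 'a \<Rightarrow> real"
  assumes "finite I" "I \<noteq> {}" "\<And>i. i \<in> I \<Longrightarrow> (g i \<longlongrightarrow> l i) F"
  shows "((\<lambda>x. Max ((\<lambda>i. g i x) ` I)) \<longlongrightarrow> Max (l ` I)) F"
  using assms
proof (induction I rule: finite_ne_induct)
  case (insert j I)
  then show ?case by (simp add: tendsto_max)
qed simp

lemma tendsto_Min_image:
  fixes g :: "'i \<Rightarrow> 'a \<Rightarrow> real"
  assumes "finite I" "I \<noteq> {}" "\<And>i. i \<in> I \<Longrightarrow> (g i \<longlongrightarrow> l i) F"
  shows "((\<lambda>x. Min ((\<lambda>i. g i x) ` I)) \<longlongrightarrow> Min (l ` I)) F"
  using assms
proof (induction I rule: finite_ne_induct)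
  case (insert j I)
  then show ?case by (simp add: tendsto_min)
qed simp

lemma tendsto_between_Min_Max_image:
  fixes g :: "'i \<Rightarrow> 'a \<Rightarrow> real" and F :: "'a \<Rightarrow> real"
  assumes I: "finite I" "I \<noteq> {}" and lim: "\<And>i. i \<in> I \<Longrightarrow> (g i \<longlongrightarrow> c) L"
    and lower: "\<And>t. Min ((\<lambda>i. g i t) ` I) \<le> F t" and upper: "\<And>t. F t \<le> Max ((\<lambda>i. g i t) ` I)"
  shows "(F \<longlongrightarrow> c) L"
proof (rule tendsto_sandwich[where f="\<lambda>t. Min ((\<lambda>i. g i t) ` I)" and h="\<lambda>t. Max ((\<lambda>i. g i t) ` I)"])
  have const_image: "(\<lambda>i. c) ` I = {c}"
    using I by auto
  show "((\<lambda>t. Min ((\<lambda>i. g i t) ` I)) \<longlongrightarrow> c) L"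
    using tendsto_Min_image[OF I lim] by (simp add: const_image)
  show "((\<lambda>t. Max ((\<lambda>i. g i t) ` I)) \<longlongrightarrow> c) L"
    using tendsto_Max_image[OF I lim] by (simp add: const_image)
qed (intro always_eventually allI lower upper)+

lemma cdf_envelope_is_cdf:
  fixes F :: "real \<Rightarrow> real" and M :: "'i \<Rightarrow> real measure"
  assumes I: "finite I" "I \<noteq> {}" and M: "\<And>i. i \<in> I \<Longrightarrow> real_distribution (M i)"
    and lower: "\<And>t. Min ((\<lambda>i. cdf (M i) t) ` I) \<le> F t"
    and upper: "\<And>t. F t \<le> Max ((\<lambda>i. cdf (M i) t) ` I)"
    and increment_lower: "\<And>a b. Min ((\<lambda>i. cdf (M i) b - cdf (M i) a) ` I) \<le> F b - F a"
    and increment_upper: "\<And>a b. F b - F a \<le> Max ((\<lambda>i. cdf (M i) b - cdf (M i) a) ` I)"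
  shows "real_distribution (interval_measure F)" "cdf (interval_measure F) = F"
proof -
  have M_fbm: "finite_borel_measure (M i)" if "i \<in> I" for i
    using real_distribution.finite_borel_measure_M[OF M[OF that]] .
  have mono: "F a \<le> F b" if "a \<le> b" for a b
  proof -
    have "0 \<le> Min ((\<lambda>i. cdf (M i) b - cdf (M i) a) ` I)"
      using I finite_borel_measure.cdf_nondecreasing[OF M_fbm that] by (auto intro!: Min.boundedI)
    then show ?thesis using increment_lower[of b a] by simp
  qed
  have right_cont: "continuous (at_right a) F" for a
  proof -
    have "((\<lambda>t. cdf (M i) t - cdf (M i) a) \<longlongrightarrow> 0) (at_right a)" if "i \<in> I" for i
      using finite_borel_measure.cdf_is_right_cont[OF M_fbm[OF that], of a]
      unfolding continuous_within by (rule LIM_zero)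
    then have "((\<lambda>t. F t - F a) \<longlongrightarrow> 0) (at_right a)"
      by (rule tendsto_between_Min_Max_image[OF I _ increment_lower increment_upper])
    then show ?thesis
      unfolding continuous_within by (simp add: LIM_zero_iff)
  qed
  have bot: "(F \<longlongrightarrow> 0) at_bot"
    using finite_borel_measure.cdf_lim_at_bot[OF M_fbm]
    by (rule tendsto_between_Min_Max_image[OF I _ lower upper])
  have top: "(F \<longlongrightarrow> 1) at_top"
    using real_distribution.cdf_lim_at_top_prob[OF M]
    by (rule tendsto_between_Min_Max_image[OF I _ lower upper])
  show "real_distribution (interval_measure F)"
    by (rule real_distribution_interval_measure[OF mono right_cont bot top])
  show "cdf (interval_measure F) = F"
    by (rule cdf_interval_measure[OF mono right_cont bot])
qed

context simplex_weights
begin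

lemma F_theta_between:
  assumes "0 \<le> \<theta>" "\<theta> \<le> 1"
  shows "Min ((\<lambda>i. cdf (nu i) t) ` {..<N}) \<le> F_theta N lam \<theta> nu t"
    "F_theta N lam \<theta> nu t \<le> Max ((\<lambda>i. cdf (nu i) t) ` {..<N})"
proof -
  let ?x = "\<lambda>i. cdf (nu i) t"
  have "(1 - \<theta>) * - lower_wmedian N lam ?x + \<theta> * - upper_wmedian N lam ?x \<le> - Min (?x ` {..<N})"
    using assms lower_wmedian_between upper_wmedian_between by (intro convex_bound_le) auto
  then show "Min (?x ` {..<N}) \<le> F_theta N lam \<theta> nu t"
    by (simp add: F_theta_def F_minus_def F_plus_def)
  have "(1 - \<theta>) * lower_wmedian N lam ?x + \<theta> * upper_wmedian N lam ?x \<le> Max (?x ` {..<N})"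
    using assms lower_wmedian_between upper_wmedian_between by (intro convex_bound_le) auto
  then show "F_theta N lam \<theta> nu t \<le> Max (?x ` {..<N})"
    by (simp add: F_theta_def F_minus_def F_plus_def)
qed

lemma F_theta_increment_between:
  fixes nu :: "nat \<Rightarrow> real measure" and a b :: real
  assumes "0 \<le> \<theta>" "\<theta> \<le> 1"
  defines "d \<equiv> \<lambda>i. cdf (nu i) b - cdf (nu i) a"
  shows "Min (d ` {..<N}) \<le> F_theta N lam \<theta> nu b - F_theta N lam \<theta> nu a"
    "F_theta N lam \<theta> nu b - F_theta N lam \<theta> nu a \<le> Max (d ` {..<N})"
proof -
  let ?L = "\<lambda>t. lower_wmedian N lam (\<lambda>i. cdf (nu i) t)"
  let ?U = "\<lambda>t. upper_wmedian N lam (\<lambda>i. cdf (nu i) t)"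
  have F: "F_theta N lam \<theta> nu b - F_theta N lam \<theta> nu a = (1 - \<theta>) * (?L b - ?L a) + \<theta> * (?U b - ?U a)"
    by (simp add: F_theta_def F_minus_def F_plus_def algebra_simps)
  note incr = wmedian_increment_between[where x="\<lambda>i. cdf (nu i) a" and y="\<lambda>i. cdf (nu i) b", folded d_def]
  have "(1 - \<theta>) * - (?L b - ?L a) + \<theta> * - (?U b - ?U a) \<le> - Min (d ` {..<N})"
    using assms(1,2) incr by (intro convex_bound_le) auto
  then show "Min (d ` {..<N}) \<le> F_theta N lam \<theta> nu b - F_theta N lam \<theta> nu a"
    unfolding F by (simp add: algebra_simps)
  show "F_theta N lam \<theta> nu b - F_theta N lam \<theta> nu a \<le> Max (d ` {..<N})"
    unfolding F using assms(1,2) incr by (intro convex_bound_le) auto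
qed

end

lemma VMed_eq_if_cdf:
  assumes "real_distribution \<mu>" "cdf \<mu> = F_theta N lam \<theta> nu"
  shows "VMed N lam \<theta> nu = \<mu>"
proof -
  let ?P = "\<lambda>\<mu>. prob_space \<mu> \<and> sets \<mu> = sets borel \<and> (\<forall>x. cdf \<mu> x = F_theta N lam \<theta> nu x)"
  have "?P \<mu>"
    using assms by (auto simp: real_distribution_def real_distribution_axioms_def)
  then have "?P (VMed N lam \<theta> nu)"
    unfolding VMed_def by (rule someI)
  then show ?thesis
    using assms by (intro cdf_unique) (auto simp: real_distribution_def real_distribution_axioms_def)
qed

section \<open>Comparing finite Borel measures on the real line\<close>

lemma (in finite_borel_measure) measure_Ioc:
  assumes "a \<le> b"
  shows "measure M {a<..b} = cdf M b - cdf M a"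
  using emeasure_Ioc[OF assms] cdf_nondecreasing[OF assms] by (simp add: measure_def)

lemma measure_add_if_cdf_add:
  assumes M1: "finite_borel_measure M1" and S: "finite_borel_measure S"
    and M2: "finite_borel_measure M2"
    and cdf_add: "\<And>x. cdf M1 x + cdf S x = cdf M2 x"
    and A: "A \<in> sets borel"
  shows "measure M1 A + measure S A = measure M2 A"
proof -
  interpret m1: finite_borel_measure M1 by fact
  interpret s: finite_borel_measure S by fact
  interpret m2: finite_borel_measure M2 by fact
  have "((\<lambda>x. cdf M1 x + cdf S x) \<longlongrightarrow> measure M1 UNIV + measure S UNIV) at_top"
    using tendsto_add[OF m1.cdf_lim_at_top s.cdf_lim_at_top] by (simp add: m1.borel_UNIV s.borel_UNIV)
  then have "(cdf M2 \<longlongrightarrow> measure M1 UNIV + measure S UNIV) at_top"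
    by (simp add: cdf_add)
  then have UNIV_add: "measure M1 UNIV + measure S UNIV = measure M2 UNIV"
    using m2.cdf_lim_at_top tendsto_unique[OF trivial_limit_at_top_linorder] by (simp add: m2.borel_UNIV)
  have sigma: "sets borel = sigma_sets UNIV (range (\<lambda>(a, b). {a<..b::real}))"
    by (subst borel_sigma_sets_Ioc) (rule sets_measure_of, auto)
  have "Int_stable (range (\<lambda>(a, b). {a<..b::real}))"
    by (auto simp: Int_stable_def Int_greaterThanAtMost)
  moreover have "range (\<lambda>(a, b). {a<..b::real}) \<subseteq> Pow UNIV" by auto
  moreover have "A \<in> sigma_sets UNIV (range (\<lambda>(a, b). {a<..b::real}))" using A sigma by simp
  ultimately show ?thesis
  proof (induction rule: sigma_sets_induct_disjoint)
    case (basic A)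
    then obtain a b where "A = {a<..b}" by auto
    then show ?case
      using m1.measure_Ioc[of a b] s.measure_Ioc[of a b] m2.measure_Ioc[of a b] cdf_add[of a] cdf_add[of b]
      by (cases "a \<le> b") auto
  next
    case empty
    then show ?case by simp
  next
    case (compl A)
    then have "A \<in> sets borel" using sigma by simp
    then show ?case
      using compl.IH UNIV_add m1.finite_measure_compl[of A] s.finite_measure_compl[of A]
        m2.finite_measure_compl[of A]
      by (simp add: m1.borel_UNIV s.borel_UNIV m2.borel_UNIV m1.M_is_borel s.M_is_borel m2.M_is_borel)
  next
    case (union A)
    then have "range A \<subseteq> sets borel" using sigma by simp
    then have "(\<lambda>i. measure M1 (A i) + measure S (A i)) sums (measure M1 (\<Union>i. A i) + measure S (\<Union>i. A i))"
      "(\<lambda>i. measure M2 (A i)) sums measure M2 (\<Union>i. A i)"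
      using m1.finite_measure_UNION[of A] s.finite_measure_UNION[of A] m2.finite_measure_UNION[of A] union.hyps
      by (auto intro: sums_add simp: m1.M_is_borel s.M_is_borel m2.M_is_borel)
    then show ?case using union.IH sums_unique2 by simp
  qed
qed

(* cdf M2 - cdf M1 is nondecreasing, hence the cdf of a measure S with M1 + S = M2. *)
lemma emeasure_le_if_cdf_increments_le:
  assumes M1: "finite_borel_measure M1" and M2: "finite_borel_measure M2"
    and le: "\<And>a b. a \<le> b \<Longrightarrow> cdf M1 b - cdf M1 a \<le> cdf M2 b - cdf M2 a"
    and A: "A \<in> sets borel"
  shows "emeasure M1 A \<le> emeasure M2 A"
proof -
  interpret m1: finite_borel_measure M1 by fact
  interpret m2: finite_borel_measure M2 by fact
  define G where "G x = cdf M2 x - cdf M1 x" for x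
  have mono: "G x \<le> G y" if "x \<le> y" for x y
    using le[OF that] unfolding G_def by simp
  have right_cont: "continuous (at_right a) G" for a
    unfolding G_def by (intro continuous_diff m1.cdf_is_right_cont m2.cdf_is_right_cont)
  have bot: "(G \<longlongrightarrow> 0) at_bot"
    using tendsto_diff[OF m2.cdf_lim_at_bot m1.cdf_lim_at_bot] unfolding G_def by simp
  have top: "(G \<longlongrightarrow> measure M2 (space M2) - measure M1 (space M1)) at_top"
    using tendsto_diff[OF m2.cdf_lim_at_top m1.cdf_lim_at_top] unfolding G_def by simp
  have "0 \<le> G x" for x
    by (rule tendsto_upperbound[OF bot]) (auto simp: eventually_at_bot_linorder intro!: exI[of _ x] mono)
  then have nonneg: "0 \<le> measure M2 (space M2) - measure M1 (space M1)"
    by (intro tendsto_lowerbound[OF top]) auto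
  have S: "finite_borel_measure (interval_measure G)"
    by (rule finite_borel_measure_interval_measure[OF mono right_cont bot top nonneg])
  have "cdf M1 x + cdf (interval_measure G) x = cdf M2 x" for x
    using cdf_interval_measure[OF mono right_cont bot] by (simp add: G_def)
  then have "measure M1 A + measure (interval_measure G) A = measure M2 A"
    by (rule measure_add_if_cdf_add[OF M1 S M2 _ A])
  then have "measure M1 A \<le> measure M2 A"
    using measure_nonneg[of "interval_measure G" A] by linarith
  then show ?thesis by (simp add: m1.emeasure_eq_measure m2.emeasure_eq_measure)
qed

section \<open>Densities\<close>

lemma emeasure_density_eq_set_integral:
  fixes w :: "'a \<Rightarrow> real"
  assumes w: "integrable M w" "AE x in M. 0 \<le> w x" and A: "A \<in> sets M"
  shows "emeasure (density M (\<lambda>x. ennreal (w x))) A = ennreal (set_lebesgue_integral M A w)"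
proof -
  have "emeasure (density M (\<lambda>x. ennreal (w x))) A = (\<integral>\<^sup>+ x. ennreal (w x) * indicator A x \<partial>M)"
    using w A by (simp add: emeasure_density)
  also have "\<dots> = (\<integral>\<^sup>+ x. ennreal (indicator A x * w x) \<partial>M)"
    by (intro nn_integral_cong) (simp add: indicator_def)
  also have "\<dots> = ennreal (set_lebesgue_integral M A w)"
    unfolding set_lebesgue_integral_def using w integrable_mult_indicator[OF A w(1)]
    by (subst nn_integral_eq_integral) (auto simp: indicator_def)
  finally show ?thesis .
qed

lemma finite_borel_measure_density_lborel:
  fixes w :: "real \<Rightarrow> real"
  assumes "integrable lborel w" "AE x in lborel. 0 \<le> w x"
  shows "finite_borel_measure (density lborel (\<lambda>x. ennreal (w x)))"
proof -
  have "finite_measure (density lborel (\<lambda>x. ennreal (w x)))"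
    using emeasure_density_eq_set_integral[OF assms, of UNIV] by (intro finite_measureI) simp
  then show ?thesis by (simp add: finite_borel_measure_def finite_borel_measure_axioms_def)
qed

lemma cdf_density_increment:
  fixes w :: "real \<Rightarrow> real"
  assumes w: "integrable lborel w" "AE x in lborel. 0 \<le> w x" and "a \<le> b"
  shows "cdf (density lborel (\<lambda>x. ennreal (w x))) b - cdf (density lborel (\<lambda>x. ennreal (w x))) a
    = set_lebesgue_integral lborel {a<..b} w"
proof -
  have "0 \<le> set_lebesgue_integral lborel {a<..b} w"
    unfolding set_lebesgue_integral_def
    by (rule integral_nonneg_AE) (use w(2) in \<open>auto simp: indicator_def\<close>)
  then show ?thesis
    using finite_borel_measure.measure_Ioc[OF finite_borel_measure_density_lborel[OF w] \<open>a \<le> b\<close>]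
      emeasure_density_eq_set_integral[OF w, of "{a<..b}"]
    by (simp add: measure_def)
qed

lemma AE_le_if_density_le:
  fixes u v :: "'a \<Rightarrow> real"
  assumes M: "sigma_finite_measure M"
    and u: "integrable M u" "AE x in M. 0 \<le> u x" and v: "integrable M v" "AE x in M. 0 \<le> v x"
    and le: "\<And>A. A \<in> sets M \<Longrightarrow>
      emeasure (density M (\<lambda>x. ennreal (u x))) A \<le> emeasure (density M (\<lambda>x. ennreal (v x))) A"
  shows "AE x in M. u x \<le> v x"
proof -
  have "AE x in M. 0 \<le> v x - u x"
  proof (rule sigma_finite_measure.density_nonneg[OF M])
    show "integrable M (\<lambda>x. v x - u x)" using u v by simp
    fix A assume A: "A \<in> sets M"
    have "0 \<le> set_lebesgue_integral M A v"
      unfolding set_lebesgue_integral_def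
      by (rule integral_nonneg_AE) (use v(2) in \<open>auto simp: indicator_def\<close>)
    then have "set_lebesgue_integral M A u \<le> set_lebesgue_integral M A v"
      using le[OF A] by (simp add: emeasure_density_eq_set_integral[OF u A] emeasure_density_eq_set_integral[OF v A])
    moreover have "set_lebesgue_integral M A (\<lambda>x. v x - u x) = set_lebesgue_integral M A v - set_lebesgue_integral M A u"
      using integrable_mult_indicator[OF A u(1)] integrable_mult_indicator[OF A v(1)]
      by (intro set_integral_diff) (auto simp: set_integrable_def)
    ultimately show "0 \<le> set_lebesgue_integral M A (\<lambda>x. v x - u x)" by simp
  qed
  then show ?thesis by auto
qed

lemma absolutely_continuous_if_dominated:
  fixes \<mu> :: "real measure" and h :: "real \<Rightarrow> real"
  assumes sets: "sets \<mu> = sets borel" and h: "h \<in> borel_measurable lborel"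
    and dominated: "\<And>A. A \<in> sets borel \<Longrightarrow> emeasure \<mu> A \<le> emeasure (density lborel (\<lambda>x. ennreal (h x))) A"
  shows "absolutely_continuous lborel \<mu>"
  unfolding absolutely_continuous_def
proof
  fix A :: "real set" assume A: "A \<in> null_sets lborel"
  then have A_borel: "A \<in> sets borel" using null_setsD2[of A lborel] by simp
  have "absolutely_continuous lborel (density lborel (\<lambda>x. ennreal (h x)))"
    using h by (intro absolutely_continuousI_density) simp
  then have "emeasure (density lborel (\<lambda>x. ennreal (h x))) A = 0"
    using A by (auto simp: absolutely_continuous_def)
  then have "emeasure \<mu> A = 0"
    using dominated[OF A_borel] by simp
  then show "A \<in> null_sets \<mu>"
    using A_borel sets by (simp add: null_sets_def)
qed

lemma real_density_if_dominated:
  fixes \<mu> :: "real measure" and h :: "real \<Rightarrow> real"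
  assumes sets: "sets \<mu> = sets borel" and h: "integrable lborel h" "AE x in lborel. 0 \<le> h x"
    and dominated: "\<And>A. A \<in> sets borel \<Longrightarrow> emeasure \<mu> A \<le> emeasure (density lborel (\<lambda>x. ennreal (h x))) A"
  obtains g where "g \<in> borel_measurable lborel" "integrable lborel g" "\<And>x. 0 \<le> g x"
    "\<mu> = density lborel (\<lambda>x. ennreal (g x))"
proof -
  have "absolutely_continuous lborel \<mu>"
    using absolutely_continuous_if_dominated[OF sets borel_measurable_integrable[OF h(1)] dominated] .
  then obtain g' where g': "g' \<in> borel_measurable lborel" "density lborel g' = \<mu>"
    using sigma_finite_measure.Radon_Nikodym[OF sigma_finite_lborel] sets by auto
  have "(\<integral>\<^sup>+x. g' x \<partial>lborel) = emeasure \<mu> UNIV"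
    using g' by (auto simp: emeasure_density)
  also have "\<dots> \<le> ennreal (set_lebesgue_integral lborel UNIV h)"
    using dominated[of UNIV] emeasure_density_eq_set_integral[OF h, of UNIV] by simp
  also have "\<dots> < \<infinity>"
    by simp
  finally have g'_finite: "(\<integral>\<^sup>+x. g' x \<partial>lborel) < \<infinity>" .
  define g where "g x = enn2real (g' x)" for x
  have g_meas: "g \<in> borel_measurable lborel"
    unfolding g_def using g'(1) by measurable
  have g_ae: "AE x in lborel. ennreal (g x) = g' x"
    using nn_integral_PInf_AE[OF g'(1) less_imp_neq[OF g'_finite]]
    by eventually_elim (auto simp: g_def ennreal_enn2real_if)
  have "density lborel (\<lambda>x. ennreal (g x)) = density lborel g'"
    by (rule density_cong) (use g_meas g'(1) g_ae in simp_all)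
  then have dens: "\<mu> = density lborel (\<lambda>x. ennreal (g x))"
    using g'(2) by simp
  have nonneg: "0 \<le> g x" for x
    by (simp add: g_def)
  have "(\<integral>\<^sup>+x. ennreal (g x) \<partial>lborel) = (\<integral>\<^sup>+x. g' x \<partial>lborel)"
    by (rule nn_integral_cong_AE[OF g_ae])
  then have "integrable lborel g"
    using g'_finite nonneg by (intro integrableI_nonneg[OF g_meas]) simp_all
  then show ?thesis
    by (rule that[OF g_meas _ nonneg dens])
qed

lemma density_between_if_cdf_increments_between:
  fixes \<mu> :: "real measure" and l h :: "real \<Rightarrow> real"
  assumes \<mu>: "finite_borel_measure \<mu>"
    and l: "integrable lborel l" "AE x in lborel. 0 \<le> l x"
    and h: "integrable lborel h" "AE x in lborel. 0 \<le> h x"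
    and lower: "\<And>a b. a \<le> b \<Longrightarrow> cdf (density lborel (\<lambda>x. ennreal (l x))) b - cdf (density lborel (\<lambda>x. ennreal (l x))) a
      \<le> cdf \<mu> b - cdf \<mu> a"
    and upper: "\<And>a b. a \<le> b \<Longrightarrow> cdf \<mu> b - cdf \<mu> a
      \<le> cdf (density lborel (\<lambda>x. ennreal (h x))) b - cdf (density lborel (\<lambda>x. ennreal (h x))) a"
  obtains g where "g \<in> borel_measurable lborel" "integrable lborel g" "\<And>x. 0 \<le> g x"
    "\<mu> = density lborel (\<lambda>x. ennreal (g x))" "AE x in lborel. l x \<le> g x \<and> g x \<le> h x"
proof -
  have lower_measure: "emeasure (density lborel (\<lambda>x. ennreal (l x))) A \<le> emeasure \<mu> A"
    and upper_measure: "emeasure \<mu> A \<le> emeasure (density lborel (\<lambda>x. ennreal (h x))) A"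
    if "A \<in> sets borel" for A
    using emeasure_le_if_cdf_increments_le[OF finite_borel_measure_density_lborel[OF l] \<mu> lower that]
      emeasure_le_if_cdf_increments_le[OF \<mu> finite_borel_measure_density_lborel[OF h] upper that]
    by simp_all
  obtain g where g: "g \<in> borel_measurable lborel" "integrable lborel g" "\<And>x. 0 \<le> g x"
    and \<mu>_g: "\<mu> = density lborel (\<lambda>x. ennreal (g x))"
    using real_density_if_dominated[OF finite_borel_measure.M_is_borel[OF \<mu>] h upper_measure] by blast
  have g_nonneg: "AE x in lborel. 0 \<le> g x"
    using g(3) by simp
  have "AE x in lborel. l x \<le> g x"
    by (rule AE_le_if_density_le[OF sigma_finite_lborel l g(2) g_nonneg])
      (use lower_measure in \<open>simp add: \<mu>_g\<close>)
  moreover have "AE x in lborel. g x \<le> h x"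
    by (rule AE_le_if_density_le[OF sigma_finite_lborel g(2) g_nonneg h])
      (use upper_measure in \<open>simp add: \<mu>_g\<close>)
  ultimately show ?thesis
    using that[OF g \<mu>_g] by auto
qed

lemma cdf_density_increment_mono:
  fixes u v :: "real \<Rightarrow> real"
  assumes u: "integrable lborel u" "AE x in lborel. 0 \<le> u x"
    and v: "integrable lborel v" "AE x in lborel. 0 \<le> v x"
    and le: "\<And>x. u x \<le> v x" and "a \<le> b"
  shows "cdf (density lborel (\<lambda>x. ennreal (u x))) b - cdf (density lborel (\<lambda>x. ennreal (u x))) a
    \<le> cdf (density lborel (\<lambda>x. ennreal (v x))) b - cdf (density lborel (\<lambda>x. ennreal (v x))) a"
  unfolding cdf_density_increment[OF u \<open>a \<le> b\<close>] cdf_density_increment[OF v \<open>a \<le> b\<close>]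
proof (rule set_integral_mono)
  show "set_integrable lborel {a<..b} u" "set_integrable lborel {a<..b} v"
    unfolding set_integrable_def
    using integrable_mult_indicator[of "{a<..b}" lborel u] integrable_mult_indicator[of "{a<..b}" lborel v] u(1) v(1)
    by simp_all
qed (rule le)

lemma integrable_Max_image:
  fixes f :: "'i \<Rightarrow> 'a \<Rightarrow> real"
  assumes "finite I" "I \<noteq> {}" "\<And>i. i \<in> I \<Longrightarrow> integrable M (f i)"
  shows "integrable M (\<lambda>x. Max ((\<lambda>i. f i x) ` I))"
  using assms by (induction I rule: finite_ne_induct) auto

lemma integrable_Min_image:
  fixes f :: "'i \<Rightarrow> 'a \<Rightarrow> real"
  assumes "finite I" "I \<noteq> {}" "\<And>i. i \<in> I \<Longrightarrow> integrable M (f i)"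
  shows "integrable M (\<lambda>x. Min ((\<lambda>i. f i x) ` I))"
  using assms by (induction I rule: finite_ne_induct) auto

lemma AE_Min_Max_image_nonneg:
  fixes f :: "'i \<Rightarrow> 'a \<Rightarrow> real"
  assumes I: "finite I" "I \<noteq> {}" and f: "\<And>i. i \<in> I \<Longrightarrow> AE x in M. 0 \<le> f i x"
  shows "AE x in M. 0 \<le> Min ((\<lambda>i. f i x) ` I)" "AE x in M. 0 \<le> Max ((\<lambda>i. f i x) ` I)"
proof -
  have all_nonneg: "AE x in M. \<forall>i\<in>I. 0 \<le> f i x"
    using I(1) f by (simp add: eventually_ball_finite_distrib)
  then show "AE x in M. 0 \<le> Min ((\<lambda>i. f i x) ` I)"
    by eventually_elim (use I in simp)
  from all_nonneg show "AE x in M. 0 \<le> Max ((\<lambda>i. f i x) ` I)"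
    by eventually_elim (use I in \<open>auto simp: Max_ge_iff\<close>)
qed

lemma cdf_density_Min_increment_le:
  fixes f :: "'i \<Rightarrow> real \<Rightarrow> real"
  assumes I: "finite I" "I \<noteq> {}"
    and f: "\<And>i. i \<in> I \<Longrightarrow> integrable lborel (f i)" "\<And>i. i \<in> I \<Longrightarrow> AE x in lborel. 0 \<le> f i x"
    and "a \<le> b"
  defines "D \<equiv> \<lambda>u. density lborel (\<lambda>x. ennreal (u x))"
  shows "cdf (D (\<lambda>x. Min ((\<lambda>i. f i x) ` I))) b - cdf (D (\<lambda>x. Min ((\<lambda>i. f i x) ` I))) a
    \<le> Min ((\<lambda>i. cdf (D (f i)) b - cdf (D (f i)) a) ` I)"
proof (rule Min.boundedI)
  fix y assume "y \<in> (\<lambda>i. cdf (D (f i)) b - cdf (D (f i)) a) ` I"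
  then obtain i where i: "i \<in> I" "y = cdf (D (f i)) b - cdf (D (f i)) a" by blast
  show "cdf (D (\<lambda>x. Min ((\<lambda>i. f i x) ` I))) b - cdf (D (\<lambda>x. Min ((\<lambda>i. f i x) ` I))) a \<le> y"
    unfolding i(2) D_def
    using integrable_Min_image[OF I f(1)] AE_Min_Max_image_nonneg(1)[OF I f(2)] f(1,2)[OF i(1)] I i(1)
    by (intro cdf_density_increment_mono[OF _ _ _ _ _ \<open>a \<le> b\<close>]) auto
qed (use I in simp_all)

lemma cdf_density_Max_increment_ge:
  fixes f :: "'i \<Rightarrow> real \<Rightarrow> real"
  assumes I: "finite I" "I \<noteq> {}"
    and f: "\<And>i. i \<in> I \<Longrightarrow> integrable lborel (f i)" "\<And>i. i \<in> I \<Longrightarrow> AE x in lborel. 0 \<le> f i x"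
    and "a \<le> b"
  defines "D \<equiv> \<lambda>u. density lborel (\<lambda>x. ennreal (u x))"
  shows "Max ((\<lambda>i. cdf (D (f i)) b - cdf (D (f i)) a) ` I)
    \<le> cdf (D (\<lambda>x. Max ((\<lambda>i. f i x) ` I))) b - cdf (D (\<lambda>x. Max ((\<lambda>i. f i x) ` I))) a"
proof (rule Max.boundedI)
  fix y assume "y \<in> (\<lambda>i. cdf (D (f i)) b - cdf (D (f i)) a) ` I"
  then obtain i where i: "i \<in> I" "y = cdf (D (f i)) b - cdf (D (f i)) a" by blast
  show "y \<le> cdf (D (\<lambda>x. Max ((\<lambda>i. f i x) ` I))) b - cdf (D (\<lambda>x. Max ((\<lambda>i. f i x) ` I))) a"
    unfolding i(2) D_def
    using integrable_Max_image[OF I f(1)] AE_Min_Max_image_nonneg(2)[OF I f(2)] f(1,2)[OF i(1)] I i(1)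
    by (intro cdf_density_increment_mono[OF _ _ _ _ _ \<open>a \<le> b\<close>]) auto
qed (use I in simp_all)

context simplex_weights
begin

lemma VMed_density_between:
  fixes nu :: "nat \<Rightarrow> real measure" and f :: "nat \<Rightarrow> real \<Rightarrow> real"
  assumes theta: "0 \<le> \<theta>" "\<theta> \<le> 1"
    and nu_distr: "\<And>i. i \<in> {..<N} \<Longrightarrow> real_distribution (nu i)"
    and f_int: "\<And>i. i \<in> {..<N} \<Longrightarrow> integrable lborel (f i)"
    and f_nonneg: "\<And>i. i \<in> {..<N} \<Longrightarrow> AE x in lborel. 0 \<le> f i x"
    and nu_dens: "\<And>i. i \<in> {..<N} \<Longrightarrow> nu i = density lborel (\<lambda>x. ennreal (f i x))"
  obtains g where "g \<in> borel_measurable lborel" "integrable lborel g" "\<And>x. 0 \<le> g x"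
    "VMed N lam \<theta> nu = density lborel (\<lambda>x. ennreal (g x))"
    "AE x in lborel. Min ((\<lambda>i. f i x) ` {..<N}) \<le> g x \<and> g x \<le> Max ((\<lambda>i. f i x) ` {..<N})"
proof -
  let ?F = "F_theta N lam \<theta> nu"
  have I: "finite {..<N}" "{..<N} \<noteq> {}"
    using N_pos by auto
  have F_cdf: "real_distribution (interval_measure ?F)" "cdf (interval_measure ?F) = ?F"
    using cdf_envelope_is_cdf[where M=nu, OF I nu_distr F_theta_between(1,2)[OF theta]
        F_theta_increment_between(1,2)[OF theta]] by blast+
  have nu_increments: "(\<lambda>i. cdf (density lborel (\<lambda>x. ennreal (f i x))) b - cdf (density lborel (\<lambda>x. ennreal (f i x))) a) ` {..<N}
      = (\<lambda>i. cdf (nu i) b - cdf (nu i) a) ` {..<N}" for a b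
    using nu_dens by (intro image_cong) auto
  define l where "l x = Min ((\<lambda>i. f i x) ` {..<N})" for x
  define h where "h x = Max ((\<lambda>i. f i x) ` {..<N})" for x
  have l: "integrable lborel l" "AE x in lborel. 0 \<le> l x"
    unfolding l_def using I f_int f_nonneg
    by (blast intro: integrable_Min_image AE_Min_Max_image_nonneg(1))+
  have h: "integrable lborel h" "AE x in lborel. 0 \<le> h x"
    unfolding h_def using I f_int f_nonneg
    by (blast intro: integrable_Max_image AE_Min_Max_image_nonneg(2))+
  have lower: "cdf (density lborel (\<lambda>x. ennreal (l x))) b - cdf (density lborel (\<lambda>x. ennreal (l x))) a
      \<le> cdf (interval_measure ?F) b - cdf (interval_measure ?F) a" if "a \<le> b" for a b
    using cdf_density_Min_increment_le[where f=f, OF I f_int f_nonneg that]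
      F_theta_increment_between(1)[OF theta, of nu b a]
    unfolding nu_increments F_cdf(2) l_def by linarith
  have upper: "cdf (interval_measure ?F) b - cdf (interval_measure ?F) a
      \<le> cdf (density lborel (\<lambda>x. ennreal (h x))) b - cdf (density lborel (\<lambda>x. ennreal (h x))) a" if "a \<le> b" for a b
    using cdf_density_Max_increment_ge[where f=f, OF I f_int f_nonneg that]
      F_theta_increment_between(2)[OF theta, of nu b a]
    unfolding nu_increments F_cdf(2) h_def by linarith
  obtain g where g: "g \<in> borel_measurable lborel" "integrable lborel g" "\<And>x. 0 \<le> g x"
      "interval_measure ?F = density lborel (\<lambda>x. ennreal (g x))" "AE x in lborel. l x \<le> g x \<and> g x \<le> h x"
    using density_between_if_cdf_increments_between[OF real_distribution.finite_borel_measure_M[OF F_cdf(1)]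
        l h lower upper] by blast
  have "VMed N lam \<theta> nu = interval_measure ?F"
    using VMed_eq_if_cdf F_cdf by blast
  with g show ?thesis
    using that unfolding l_def h_def by simp
qed

end

section \<open>\<open>L\<^sup>p\<close> bounds\<close>

lemma esssup_nonneg:
  fixes u :: "'a \<Rightarrow> ereal"
  assumes "emeasure M (space M) \<noteq> 0" "AE x in M. 0 \<le> u x"
  shows "0 \<le> esssup M u"
proof -
  have "esssup M (\<lambda>x. 0) \<le> esssup M u"
    using assms(2) by (intro esssup_AE_mono) simp_all
  then show ?thesis using esssup_const[OF assms(1), of "0::ereal"] by simp
qed

lemma esssup_abs_nonneg: "0 \<le> esssup lborel (\<lambda>x. ereal \<bar>u x\<bar>)"
  by (rule esssup_nonneg) simp_all

lemma Lp_mono: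
  fixes u v :: "real \<Rightarrow> real"
  assumes v: "Lp_mem p v" and u: "u \<in> borel_measurable lborel"
    and le: "AE x in lborel. \<bar>u x\<bar> \<le> \<bar>v x\<bar>"
  shows "Lp_mem p u \<and> Lp_norm p u \<le> Lp_norm p v"
proof (cases "p = \<infinity>")
  case True
  have "esssup lborel (\<lambda>x. ereal \<bar>u x\<bar>) \<le> esssup lborel (\<lambda>x. ereal \<bar>v x\<bar>)"
  proof (rule esssup_AE_mono)
    show "(\<lambda>x. ereal \<bar>u x\<bar>) \<in> borel_measurable lborel" using u by measurable
    show "AE x in lborel. ereal \<bar>u x\<bar> \<le> ereal \<bar>v x\<bar>" using le by simp
  qed
  moreover have "esssup lborel (\<lambda>x. ereal \<bar>v x\<bar>) < \<infinity>"
    using v True by (simp add: Lp_mem_def)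
  ultimately have "esssup lborel (\<lambda>x. ereal \<bar>u x\<bar>) < \<infinity>"
    "real_of_ereal (esssup lborel (\<lambda>x. ereal \<bar>u x\<bar>)) \<le> real_of_ereal (esssup lborel (\<lambda>x. ereal \<bar>v x\<bar>))"
    using real_of_ereal_positive_mono[OF esssup_abs_nonneg] by auto
  then show ?thesis using True u by (simp add: Lp_mem_def Lp_norm_def)
next
  case False
  define q where "q = enn2real p"
  have pow_le: "AE x in lborel. \<bar>u x\<bar> powr q \<le> \<bar>v x\<bar> powr q"
    using le by eventually_elim (simp add: q_def powr_mono2)
  have v_int: "integrable lborel (\<lambda>x. \<bar>v x\<bar> powr q)"
    using v False by (simp add: Lp_mem_def q_def)
  have u_int: "integrable lborel (\<lambda>x. \<bar>u x\<bar> powr q)"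
  proof (rule Bochner_Integration.integrable_bound[OF v_int])
    show "(\<lambda>x. \<bar>u x\<bar> powr q) \<in> borel_measurable lborel" using u by measurable
    show "AE x in lborel. norm (\<bar>u x\<bar> powr q) \<le> norm (\<bar>v x\<bar> powr q)" using pow_le by simp
  qed
  have "(LINT x|lborel. \<bar>u x\<bar> powr q) \<le> (LINT x|lborel. \<bar>v x\<bar> powr q)"
    by (rule integral_mono_AE[OF u_int v_int pow_le])
  then have "(LINT x|lborel. \<bar>u x\<bar> powr q) powr (1 / q) \<le> (LINT x|lborel. \<bar>v x\<bar> powr q) powr (1 / q)"
    by (rule powr_mono2[rotated 2]) (simp_all add: q_def integral_nonneg)
  then show ?thesis
    using False u u_int by (simp add: Lp_mem_def Lp_norm_def q_def)
qed

lemma add_powr_le_powr_add: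
  fixes x y q :: real
  assumes "0 \<le> x" "0 \<le> y" "1 \<le> q"
  shows "x powr q + y powr q \<le> (x + y) powr q"
proof -
  have split: "z powr q = z * z powr (q - 1)" if "0 \<le> z" for z :: real
    using that assms(3) by (cases "z = 0") (simp_all add: powr_mult_base)
  have "x * x powr (q - 1) + y * y powr (q - 1) \<le> x * (x + y) powr (q - 1) + y * (x + y) powr (q - 1)"
    using assms by (intro add_mono mult_left_mono powr_mono2) auto
  then show ?thesis
    using split[of x] split[of y] split[of "x + y"] assms by (simp add: algebra_simps)
qed

lemma sum_powr_le_powr_sum:
  fixes a :: "'i \<Rightarrow> real" and q :: real
  assumes "finite I" "\<And>i. i \<in> I \<Longrightarrow> 0 \<le> a i" "1 \<le> q"
  shows "(\<Sum>i\<in>I. a i powr q) \<le> (\<Sum>i\<in>I. a i) powr q"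
  using assms
proof (induction I rule: finite_induct)
  case (insert j I)
  have "(\<Sum>i\<in>insert j I. a i powr q) \<le> a j powr q + (\<Sum>i\<in>I. a i) powr q"
    using insert by simp
  also have "\<dots> \<le> (a j + (\<Sum>i\<in>I. a i)) powr q"
    using insert by (intro add_powr_le_powr_add sum_nonneg) auto
  finally show ?case using insert by simp
qed simp

lemma esssup_le_sum_if_dominated:
  fixes f :: "'i \<Rightarrow> real \<Rightarrow> real" and h :: "real \<Rightarrow> real"
  assumes I: "finite I" and h: "h \<in> borel_measurable lborel"
    and dominated: "\<And>x. \<exists>i\<in>I. \<bar>h x\<bar> \<le> \<bar>f i x\<bar>"
  shows "esssup lborel (\<lambda>x. ereal \<bar>h x\<bar>) \<le> (\<Sum>i\<in>I. esssup lborel (\<lambda>x. ereal \<bar>f i x\<bar>))"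
proof (rule esssup_I)
  show "(\<lambda>x. ereal \<bar>h x\<bar>) \<in> borel_measurable lborel" using h by measurable
  have "AE x in lborel. \<forall>i\<in>I. ereal \<bar>f i x\<bar> \<le> esssup lborel (\<lambda>x. ereal \<bar>f i x\<bar>)"
    using I by (simp add: eventually_ball_finite_distrib esssup_AE)
  then show "AE x in lborel. ereal \<bar>h x\<bar> \<le> (\<Sum>i\<in>I. esssup lborel (\<lambda>x. ereal \<bar>f i x\<bar>))"
  proof eventually_elim
    case (elim x)
    obtain j where j: "j \<in> I" "\<bar>h x\<bar> \<le> \<bar>f j x\<bar>" using dominated by blast
    then have "ereal \<bar>h x\<bar> \<le> esssup lborel (\<lambda>x. ereal \<bar>f j x\<bar>)"
      using elim order.trans[of "ereal \<bar>h x\<bar>" "ereal \<bar>f j x\<bar>"] by simp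
    also have "\<dots> \<le> (\<Sum>i\<in>I. esssup lborel (\<lambda>x. ereal \<bar>f i x\<bar>))"
      using sum_mono2[OF I, of "{j}" "\<lambda>i. esssup lborel (\<lambda>x. ereal \<bar>f i x\<bar>)"] j(1)
      by (simp add: esssup_abs_nonneg)
    finally show ?case .
  qed
qed

lemma integral_powr_le_sum_if_dominated:
  fixes f :: "'i \<Rightarrow> real \<Rightarrow> real" and h :: "real \<Rightarrow> real"
  assumes I: "finite I" and q: "0 \<le> q" and h: "h \<in> borel_measurable lborel"
    and dominated: "\<And>x. \<exists>i\<in>I. \<bar>h x\<bar> \<le> \<bar>f i x\<bar>"
    and f: "\<And>i. i \<in> I \<Longrightarrow> integrable lborel (\<lambda>x. \<bar>f i x\<bar> powr q)"
  shows "integrable lborel (\<lambda>x. \<bar>h x\<bar> powr q)"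
    "(LINT x|lborel. \<bar>h x\<bar> powr q) \<le> (\<Sum>i\<in>I. LINT x|lborel. \<bar>f i x\<bar> powr q)"
proof -
  have sum_int: "integrable lborel (\<lambda>x. \<Sum>i\<in>I. \<bar>f i x\<bar> powr q)"
    using f by (rule Bochner_Integration.integrable_sum)
  have pointwise: "\<bar>h x\<bar> powr q \<le> (\<Sum>i\<in>I. \<bar>f i x\<bar> powr q)" for x
  proof -
    obtain j where j: "j \<in> I" "\<bar>h x\<bar> \<le> \<bar>f j x\<bar>" using dominated by blast
    then have "\<bar>h x\<bar> powr q \<le> \<bar>f j x\<bar> powr q" using q by (simp add: powr_mono2)
    also have "\<dots> \<le> (\<Sum>i\<in>I. \<bar>f i x\<bar> powr q)" using I j(1) by (intro member_le_sum) auto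
    finally show ?thesis .
  qed
  show h_int: "integrable lborel (\<lambda>x. \<bar>h x\<bar> powr q)"
  proof (rule Bochner_Integration.integrable_bound[OF sum_int])
    show "(\<lambda>x. \<bar>h x\<bar> powr q) \<in> borel_measurable lborel" using h by measurable
    show "AE x in lborel. norm (\<bar>h x\<bar> powr q) \<le> norm (\<Sum>i\<in>I. \<bar>f i x\<bar> powr q)"
      using pointwise by (intro AE_I2) (simp add: sum_nonneg)
  qed
  have "(LINT x|lborel. \<bar>h x\<bar> powr q) \<le> (LINT x|lborel. (\<Sum>i\<in>I. \<bar>f i x\<bar> powr q))"
    by (rule integral_mono[OF h_int sum_int pointwise])
  also have "\<dots> = (\<Sum>i\<in>I. LINT x|lborel. \<bar>f i x\<bar> powr q)"
    using f by (rule Bochner_Integration.integral_sum)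
  finally show "(LINT x|lborel. \<bar>h x\<bar> powr q) \<le> (\<Sum>i\<in>I. LINT x|lborel. \<bar>f i x\<bar> powr q)" .
qed

lemma Lp_norm_le_sum_if_dominated:
  fixes f :: "'i \<Rightarrow> real \<Rightarrow> real" and h :: "real \<Rightarrow> real"
  assumes I: "finite I" and p: "1 \<le> p" and f: "\<And>i. i \<in> I \<Longrightarrow> Lp_mem p (f i)"
    and h: "h \<in> borel_measurable lborel" and dominated: "\<And>x. \<exists>i\<in>I. \<bar>h x\<bar> \<le> \<bar>f i x\<bar>"
  shows "Lp_mem p h \<and> Lp_norm p h \<le> (\<Sum>i\<in>I. Lp_norm p (f i))"
proof (cases "p = \<infinity>")
  case True
  define E where "E w = esssup lborel (\<lambda>x. ereal \<bar>w x\<bar>)" for w :: "real \<Rightarrow> real"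
  have E_real: "ereal (real_of_ereal (E (f i))) = E (f i)" if "i \<in> I" for i
  proof -
    have "E (f i) < \<infinity>" using f[OF that] True by (simp add: Lp_mem_def E_def)
    then show ?thesis
      using esssup_abs_nonneg[of "f i"] by (simp add: E_def abs_ereal_ge0 ereal_real')
  qed
  have "E h \<le> (\<Sum>i\<in>I. E (f i))"
    unfolding E_def by (rule esssup_le_sum_if_dominated[OF I h dominated])
  also have "\<dots> = (\<Sum>i\<in>I. ereal (real_of_ereal (E (f i))))"
    by (rule sum.cong[OF refl E_real[symmetric]])
  also have "\<dots> = ereal (\<Sum>i\<in>I. real_of_ereal (E (f i)))"
    by simp
  finally have E_h: "E h \<le> ereal (\<Sum>i\<in>I. real_of_ereal (E (f i)))" .
  then have "E h < \<infinity>"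
    using order.strict_trans1 by fastforce
  moreover have "real_of_ereal (E h) \<le> (\<Sum>i\<in>I. real_of_ereal (E (f i)))"
    using real_of_ereal_positive_mono[OF esssup_abs_nonneg E_h[unfolded E_def]] by (simp add: E_def)
  ultimately
  show ?thesis using True h by (simp add: Lp_mem_def Lp_norm_def E_def)
next
  case False
  define q where "q = enn2real p"
  have q: "1 \<le> q"
    using enn2real_mono[OF p] False by (simp add: q_def top.not_eq_extremum)
  define a where "a i = (LINT x|lborel. \<bar>f i x\<bar> powr q) powr (1 / q)" for i
  have f_int: "integrable lborel (\<lambda>x. \<bar>f i x\<bar> powr q)" if "i \<in> I" for i
    using f[OF that] False by (simp add: Lp_mem_def q_def)
  have a_pow: "a i powr q = (LINT x|lborel. \<bar>f i x\<bar> powr q)" for i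
    using q by (simp add: a_def powr_powr integral_nonneg)
  note h_int = integral_powr_le_sum_if_dominated[of I q h f, OF I _ h dominated f_int]
  have "(LINT x|lborel. \<bar>h x\<bar> powr q) \<le> (\<Sum>i\<in>I. a i powr q)"
    using h_int(2) q by (simp add: a_pow)
  also have "\<dots> \<le> (\<Sum>i\<in>I. a i) powr q"
    using I q by (intro sum_powr_le_powr_sum) (simp_all add: a_def)
  finally have "(LINT x|lborel. \<bar>h x\<bar> powr q) powr (1 / q) \<le> ((\<Sum>i\<in>I. a i) powr q) powr (1 / q)"
    by (rule powr_mono2[rotated 2]) (use q in \<open>simp_all add: integral_nonneg\<close>)
  also have "\<dots> = (\<Sum>i\<in>I. a i)"
    using q by (simp add: powr_powr sum_nonneg a_def)
  finally show ?thesis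
    using False h h_int(1) q by (simp add: Lp_mem_def Lp_norm_def a_def q_def)
qed

lemma Lp_bounds_between_Min_Max:
  fixes f :: "'i \<Rightarrow> real \<Rightarrow> real" and g :: "real \<Rightarrow> real"
  assumes I: "finite I" "I \<noteq> {}"
    and f_meas: "\<And>i. i \<in> I \<Longrightarrow> f i \<in> borel_measurable lborel"
    and f_nonneg: "\<And>i. i \<in> I \<Longrightarrow> AE x in lborel. 0 \<le> f i x"
    and g: "g \<in> borel_measurable lborel"
      "AE x in lborel. Min ((\<lambda>i. f i x) ` I) \<le> g x \<and> g x \<le> Max ((\<lambda>i. f i x) ` I)"
    and p: "1 \<le> p" and f_Lp: "\<And>i. i \<in> I \<Longrightarrow> Lp_mem p (f i)"
  shows "Lp_mem p g \<and>
    Lp_norm p (\<lambda>x. Min ((\<lambda>i. f i x) ` I)) \<le> Lp_norm p g \<and>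
    Lp_norm p g \<le> Lp_norm p (\<lambda>x. Max ((\<lambda>i. f i x) ` I)) \<and>
    Lp_norm p (\<lambda>x. Max ((\<lambda>i. f i x) ` I)) \<le> (\<Sum>i\<in>I. Lp_norm p (f i))"
proof -
  define l where "l x = Min ((\<lambda>i. f i x) ` I)" for x
  define h where "h x = Max ((\<lambda>i. f i x) ` I)" for x
  have l_meas: "l \<in> borel_measurable lborel" and h_meas: "h \<in> borel_measurable lborel"
    unfolding l_def h_def using I f_meas by (auto intro!: borel_measurable_Min borel_measurable_Max)
  have l_nonneg: "AE x in lborel. 0 \<le> l x"
    unfolding l_def by (rule AE_Min_Max_image_nonneg(1)[OF I f_nonneg])
  have h_dominated: "\<exists>i\<in>I. \<bar>h x\<bar> \<le> \<bar>f i x\<bar>" for x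
  proof -
    have "h x \<in> (\<lambda>i. f i x) ` I"
      unfolding h_def using I by (intro Max_in) auto
    then show ?thesis by auto
  qed
  have "AE x in lborel. 0 \<le> l x \<and> l x \<le> g x \<and> g x \<le> h x"
    using g(2) l_nonneg unfolding l_def h_def by eventually_elim simp
  then have g_le_h: "AE x in lborel. \<bar>g x\<bar> \<le> \<bar>h x\<bar>" and l_le_g: "AE x in lborel. \<bar>l x\<bar> \<le> \<bar>g x\<bar>"
    by (eventually_elim, arith)+
  have h_Lp: "Lp_mem p h \<and> Lp_norm p h \<le> (\<Sum>i\<in>I. Lp_norm p (f i))"
    by (rule Lp_norm_le_sum_if_dominated[OF I(1) p f_Lp h_meas h_dominated])
  moreover have g_Lp: "Lp_mem p g \<and> Lp_norm p g \<le> Lp_norm p h"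
    using Lp_mono[OF _ g(1) g_le_h] h_Lp by blast
  moreover have "Lp_norm p l \<le> Lp_norm p g"
    using Lp_mono[OF _ l_meas l_le_g] g_Lp by blast
  ultimately show ?thesis
    unfolding l_def[abs_def] h_def[abs_def] by blast
qed

theorem theorem4p6:
  fixes N :: nat and lam :: "nat \<Rightarrow> real" and nu :: "nat \<Rightarrow> real measure"
    and f :: "nat \<Rightarrow> real \<Rightarrow> real" and \<theta> :: real
  assumes lam_nonneg: "\<forall>i<N. lam i \<ge> 0"
    and lam_sum: "(\<Sum>i<N. lam i) = 1"
    and nu_prob: "\<forall>i<N. prob_space (nu i) \<and> sets (nu i) = sets borel"
    and nu_moment: "\<forall>i<N. integrable (nu i) (\<lambda>x. x)"
    and theta: "0 \<le> \<theta>" "\<theta> \<le> 1"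
    and f_meas: "\<forall>i<N. f i \<in> borel_measurable lborel"
    and f_nonneg: "\<forall>i<N. AE x in lborel. f i x \<ge> 0"
    and f_L1: "\<forall>i<N. integrable lborel (f i)"
    and nu_dens: "\<forall>i<N. nu i = density lborel (\<lambda>x. ennreal (f i x))"
  shows "\<exists>g. g \<in> borel_measurable lborel \<and> integrable lborel g \<and>
           (AE x in lborel. g x \<ge> 0) \<and>
           VMed N lam \<theta> nu = density lborel (\<lambda>x. ennreal (g x)) \<and>
           (AE x in lborel. Min ((\<lambda>i. f i x) ` {..<N}) \<le> g x \<and>
                            g x \<le> Max ((\<lambda>i. f i x) ` {..<N})) \<and>
           (\<forall>p::ennreal. p \<ge> 1 \<longrightarrow> (\<forall>i<N. Lp_mem p (f i)) \<longrightarrow>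
              Lp_mem p g \<and>
              Lp_norm p (\<lambda>x. Min ((\<lambda>i. f i x) ` {..<N})) \<le> Lp_norm p g \<and>
              Lp_norm p g \<le> Lp_norm p (\<lambda>x. Max ((\<lambda>i. f i x) ` {..<N})) \<and>
              Lp_norm p (\<lambda>x. Max ((\<lambda>i. f i x) ` {..<N})) \<le> (\<Sum>i<N. Lp_norm p (f i)))"
proof -
  interpret simplex_weights N lam
    using lam_nonneg lam_sum by unfold_locales
  have I: "finite {..<N}" "{..<N} \<noteq> {}"
    using N_pos by auto
  have nu_distr: "real_distribution (nu i)" if "i \<in> {..<N}" for i
    using nu_prob that by (auto simp: real_distribution_def real_distribution_axioms_def)
  have f_measurable: "f i \<in> borel_measurable lborel" and f_int: "integrable lborel (f i)"
    and f_ae_nonneg: "AE x in lborel. 0 \<le> f i x"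
    and f_density: "nu i = density lborel (\<lambda>x. ennreal (f i x))" if "i \<in> {..<N}" for i
    using f_meas f_L1 f_nonneg nu_dens that by auto
  obtain g where g: "g \<in> borel_measurable lborel" "integrable lborel g" "\<And>x. 0 \<le> g x"
      "VMed N lam \<theta> nu = density lborel (\<lambda>x. ennreal (g x))"
      "AE x in lborel. Min ((\<lambda>i. f i x) ` {..<N}) \<le> g x \<and> g x \<le> Max ((\<lambda>i. f i x) ` {..<N})"
    using VMed_density_between[where nu=nu and f=f, OF theta nu_distr f_int f_ae_nonneg f_density] by blast
  have "Lp_mem p g \<and>
      Lp_norm p (\<lambda>x. Min ((\<lambda>i. f i x) ` {..<N})) \<le> Lp_norm p g \<and>
      Lp_norm p g \<le> Lp_norm p (\<lambda>x. Max ((\<lambda>i. f i x) ` {..<N})) \<and>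
      Lp_norm p (\<lambda>x. Max ((\<lambda>i. f i x) ` {..<N})) \<le> (\<Sum>i<N. Lp_norm p (f i))"
    if "1 \<le> p" "\<forall>i<N. Lp_mem p (f i)" for p :: ennreal
    using that(2) by (intro Lp_bounds_between_Min_Max[where f=f, OF I f_measurable f_ae_nonneg g(1,5) that(1)]) auto
  moreover have "AE x in lborel. 0 \<le> g x"
    using g(3) by simp
  ultimately show ?thesis
    using g(1,2,4,5) by blast
qed

end
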